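(* If $d$ is an odd positive integer, then for every $x\ge0$, $$\Pi_{\le d}\,\mathrm{sign}(x)=\sqrt{\frac{2d}{\pi}}\,H_{d-1}(0)\int_0^x\frac{H_d(t)}{t}\,dt.$$
   Context: The Hermite polynomials $(H_k)_{k\ge0}$ are the orthonormal polynomials for $\mathcal{N}(0,1)$ with $\deg H_k=k$ and positive leading coefficient (the probabilist's Hermite polynomials divided by $\sqrt{k!}$). $\Pi_{\le d}g=\sum_{k=0}^d\langle g,H_k\rangle H_k$ where $\langle g,h\rangle=\mathbb{E}_{x\sim\mathcal{N}(0,1)}[g(x)h(x)]$, and $\mathrm{sign}:\mathbb{R}\to\{\pm1\}$ is the sign function. *)

theory Defs
  imports "HOL-Probability.Probability"
begin

fun hermite_prob :: "nat \<Rightarrow> real \<Rightarrow> real" where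
  "hermite_prob 0 x = 1"
| "hermite_prob (Suc 0) x = x"
| "hermite_prob (Suc (Suc n)) x = x * hermite_prob (Suc n) x - real (Suc n) * hermite_prob n x"

text \<open>Normalized Hermite polynomials H_k = He_k / sqrt(k!), orthonormal for N(0,1).\<close>
definition hermite :: "nat \<Rightarrow> real \<Rightarrow> real" where
  "hermite k x = hermite_prob k x / sqrt (fact k)"

definition gauss_inner :: "(real \<Rightarrow> real) \<Rightarrow> (real \<Rightarrow> real) \<Rightarrow> real" where
  "gauss_inner g h = (\<integral>x. g x * h x * std_normal_density x \<partial>lborel)"

definition hermite_proj :: "nat \<Rightarrow> (real \<Rightarrow> real) \<Rightarrow> real \<Rightarrow> real" where
  "hermite_proj d g x = (\<Sum>k\<le>d. gauss_inner g (hermite k) * hermite k x)"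

text \<open>sign : R -> {1,-1}; the value at 0 is irrelevant (null set), we take sign 0 = 1.\<close>
definition sign_pm :: "real \<Rightarrow> real" where
  "sign_pm x = (if x \<ge> 0 then 1 else -1)"

end

(*
  Write He_k for hermite_prob k and phi for the standard normal density. Since
  (He_m phi)' = - He_(m+1) phi, integrating on each half-line gives
  <sign, He_(m+1)> = 2 He_m(0) phi(0), while <sign, He_0> = 0. Hence for d = n + 1 the
  projection is 2 phi(0) sum_(j<=n) He_j(0) He_(j+1)(x) / (j+1)!, a polynomial vanishing at 0
  whose derivative 2 phi(0) sum_(j<=n) He_j(0) He_j(x) / j! equals
  2 phi(0) He_n(0) He_d(x) / (n! x) by the Christoffel-Darboux formula at y = 0, because
  He_d(0) = 0 for odd d. Integrating from 0 to x and normalising gives the claim.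
*)
theory Submission
  imports Defs "HOL-Real_Asymp.Real_Asymp"
begin

text \<open>At \<open>n = 0\<close> the truncated \<open>n - 1\<close> is harmless: its term carries the factor \<open>real n = 0\<close>.\<close>

lemma hermite_prob_Suc:
  "hermite_prob (Suc n) x = x * hermite_prob n x - real n * hermite_prob (n - 1) x"
  by (cases n) auto

lemma hermite_prob_0_eq: "hermite_prob 0 = (\<lambda>_. 1)"
  by (rule ext) simp

lemma hermite_prob_has_real_derivative:
  "(hermite_prob n has_real_derivative real n * hermite_prob (n - 1) x) (at x)"
proof (induction n arbitrary: x rule: induct_nat_012)
  case 0
  show ?case
    by (simp add: hermite_prob_0_eq)
next
  case 1
  have "hermite_prob (Suc 0) = (\<lambda>x. x)"
    by (rule ext) simp
  then show ?case
    by simp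
next
  case (ge2 n)
  have "hermite_prob (Suc (Suc n)) = (\<lambda>x. x * hermite_prob (Suc n) x - real (Suc n) * hermite_prob n x)"
    by (rule ext) simp
  moreover have "((\<lambda>x. x * hermite_prob (Suc n) x - real (Suc n) * hermite_prob n x) has_real_derivative
      x * (real (Suc n) * hermite_prob n x) + 1 * hermite_prob (Suc n) x
      - real (Suc n) * (real n * hermite_prob (n - 1) x)) (at x)"
    using ge2 by (intro DERIV_diff DERIV_mult' DERIV_cmult DERIV_ident) simp_all
  moreover have "x * (real (Suc n) * hermite_prob n x) + 1 * hermite_prob (Suc n) x
      - real (Suc n) * (real n * hermite_prob (n - 1) x) = real (Suc (Suc n)) * hermite_prob (Suc n) x"
    by (simp only: hermite_prob_Suc[of n x]) (simp add: algebra_simps)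
  ultimately show ?case
    by simp
qed

lemma isCont_hermite_prob: "isCont (hermite_prob n) x"
  using hermite_prob_has_real_derivative by (rule DERIV_isCont)

lemma hermite_prob_odd_eq_0: "odd n \<Longrightarrow> hermite_prob n 0 = 0"
  by (induction n rule: induct_nat_012) auto

lemma hermite_prob_mult_Suc_at_0: "hermite_prob j 0 * hermite_prob (Suc j) 0 = 0"
  by (cases "even j") (simp_all add: hermite_prob_odd_eq_0)

lemma hermite_prob_christoffel_darboux:
  "(x - y) * (\<Sum>j\<le>n. hermite_prob j x * hermite_prob j y / fact j) =
     (hermite_prob (Suc n) x * hermite_prob n y - hermite_prob n x * hermite_prob (Suc n) y) / fact n"
proof (induction n)
  case 0
  show ?case
    by (simp add: algebra_simps)
next
  case (Suc n)
  let ?H = "\<lambda>k. hermite_prob k x * hermite_prob k y"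
  have "(x - y) * (\<Sum>j\<le>Suc n. ?H j / fact j) =
      (x - y) * (\<Sum>j\<le>n. ?H j / fact j) + (x - y) * ?H (Suc n) / fact (Suc n)"
    by (simp add: algebra_simps)
  also have "\<dots> = (hermite_prob (Suc n) x * hermite_prob n y - hermite_prob n x * hermite_prob (Suc n) y) / fact n
      + (x - y) * ?H (Suc n) / fact (Suc n)"
    by (simp only: Suc.IH)
  also have "\<dots> = (hermite_prob (Suc (Suc n)) x * hermite_prob (Suc n) y
      - hermite_prob (Suc n) x * hermite_prob (Suc (Suc n)) y) / fact (Suc n)"
    by (simp add: field_simps del: fact_Suc of_nat_Suc add: fact_Suc[of n])
  finally show ?case .
qed

lemma abs_hermite_prob_le:
  "1 \<le> \<bar>x\<bar> \<Longrightarrow> \<bar>hermite_prob n x\<bar> \<le> fact (Suc n) * \<bar>x\<bar> ^ n"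
proof (induction n rule: induct_nat_012)
  case (ge2 n)
  have "\<bar>x\<bar> ^ n \<le> \<bar>x\<bar> ^ Suc (Suc n)"
    using ge2.prems by (intro power_increasing) auto
  have "\<bar>hermite_prob (Suc (Suc n)) x\<bar> \<le> \<bar>x * hermite_prob (Suc n) x\<bar> + \<bar>real (Suc n) * hermite_prob n x\<bar>"
    using abs_triangle_ineq4 by simp
  also have "\<dots> = \<bar>x\<bar> * \<bar>hermite_prob (Suc n) x\<bar> + real (Suc n) * \<bar>hermite_prob n x\<bar>"
    by (simp add: abs_mult)
  also have "\<dots> \<le> \<bar>x\<bar> * (fact (Suc (Suc n)) * \<bar>x\<bar> ^ Suc n) + real (Suc n) * (fact (Suc n) * \<bar>x\<bar> ^ n)"
    using ge2 by (intro add_mono mult_left_mono) auto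
  also have "\<dots> \<le> \<bar>x\<bar> * (fact (Suc (Suc n)) * \<bar>x\<bar> ^ Suc n) + real (Suc n) * (fact (Suc n) * \<bar>x\<bar> ^ Suc (Suc n))"
    using \<open>\<bar>x\<bar> ^ n \<le> \<bar>x\<bar> ^ Suc (Suc n)\<close> by (intro add_mono mult_left_mono) auto
  also have "\<dots> = (fact (Suc (Suc n)) + real (Suc n) * fact (Suc n)) * \<bar>x\<bar> ^ Suc (Suc n)"
    by (simp add: algebra_simps del: fact_Suc)
  also have "\<dots> \<le> fact (Suc (Suc (Suc n))) * \<bar>x\<bar> ^ Suc (Suc n)"
    by (intro mult_right_mono) (simp_all add: algebra_simps)
  finally show ?case .
qed auto

lemma std_normal_density_minus: "std_normal_density (- x) = std_normal_density x"
  by (simp add: std_normal_density_def)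

lemma std_normal_density_has_real_derivative:
  "(std_normal_density has_real_derivative - x * std_normal_density x) (at x)"
  unfolding std_normal_density_def[abs_def]
  by (auto intro!: derivative_eq_intros simp: field_simps)

lemma integrable_gauss_moment_hermite_prob:
  "integrable lborel (\<lambda>x. std_normal_density x * x ^ k * hermite_prob n x)"
proof (induction n arbitrary: k rule: induct_nat_012)
  case 0
  show ?case
    using integrable_std_normal_moment by simp
next
  case 1
  show ?case
    using integrable_std_normal_moment[of "Suc k"] by (simp add: ac_simps)
next
  case (ge2 n)
  have "integrable lborel (\<lambda>x. std_normal_density x * x ^ Suc k * hermite_prob (Suc n) x
      - real (Suc n) * (std_normal_density x * x ^ k * hermite_prob n x))"
    using ge2 by (intro Bochner_Integration.integrable_diff Bochner_Integration.integrable_mult_right)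
  then show ?case
    by (simp add: algebra_simps)
qed

lemma integrable_hermite_prob_gauss:
  assumes "\<bar>c\<bar> = 1"
  shows "integrable lborel (\<lambda>x. hermite_prob n (c * x) * std_normal_density x)"
proof -
  have "integrable lborel (\<lambda>x. hermite_prob n (0 + c * x) * std_normal_density (0 + c * x))"
    using integrable_gauss_moment_hermite_prob[of 0 n] assms
    by (intro lborel_integrable_real_affine) (auto simp: mult.commute)
  moreover have "std_normal_density (c * x) = std_normal_density x" for x
  proof -
    have "c\<^sup>2 = 1"
      using assms by (metis power2_abs power_one)
    then show ?thesis
      by (simp add: std_normal_density_def power_mult_distrib)
  qed
  ultimately show ?thesis
    by simp
qed

lemma hermite_prob_gauss_tendsto_0:
  assumes "\<bar>c\<bar> = 1"
  shows "((\<lambda>x. hermite_prob n (c * x) * std_normal_density x) \<longlongrightarrow> 0) at_top"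
proof (rule Lim_null_comparison)
  show "((\<lambda>x. fact (Suc n) * x ^ n * std_normal_density x) \<longlongrightarrow> 0) at_top"
    unfolding std_normal_density_def by real_asymp
  show "\<forall>\<^sub>F x in at_top. norm (hermite_prob n (c * x) * std_normal_density x)
      \<le> fact (Suc n) * x ^ n * std_normal_density x"
    using eventually_ge_at_top[of 1]
  proof eventually_elim
    case (elim x)
    then have "\<bar>c * x\<bar> = x"
      using assms by (simp add: abs_mult)
    then have "\<bar>hermite_prob n (c * x)\<bar> \<le> fact (Suc n) * x ^ n"
      using abs_hermite_prob_le[of "c * x" n] elim by simp
    then show ?case
      by (simp add: abs_mult mult_right_mono)
  qed
qed

lemma set_integral_atLeast_FTC:
  fixes f F :: "real \<Rightarrow> real"
  assumes deriv: "\<And>x. a \<le> x \<Longrightarrow> (F has_real_derivative f x) (at x)"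
    and cont: "\<And>x. a \<le> x \<Longrightarrow> isCont f x"
    and int: "set_integrable lborel {a..} f"
    and lim: "(F \<longlongrightarrow> L) at_top"
  shows "(\<integral>x\<in>{a..}. f x \<partial>lborel) = L - F a"
proof -
  have "((\<lambda>b. \<integral>x\<in>{a..b}. f x \<partial>lborel) \<longlongrightarrow> (\<integral>x\<in>{a..}. f x \<partial>lborel)) at_top"
    using int by (intro tendsto_set_lebesgue_integral_at_top) auto
  moreover have "\<forall>\<^sub>F b in at_top. (\<integral>x\<in>{a..b}. f x \<partial>lborel) = F b - F a"
    using eventually_ge_at_top[of a]
  proof eventually_elim
    case (elim b)
    then show ?case
      unfolding set_lebesgue_integral_def
      by (intro integral_FTC_atLeastAtMost continuous_at_imp_continuous_on ballI cont)
        (auto intro: has_field_derivative_at_within deriv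
          simp: has_real_derivative_iff_has_vector_derivative[symmetric])
  qed
  ultimately have "((\<lambda>b. F b - F a) \<longlongrightarrow> (\<integral>x\<in>{a..}. f x \<partial>lborel)) at_top"
    by (rule Lim_transform_eventually)
  moreover have "((\<lambda>b. F b - F a) \<longlongrightarrow> L - F a) at_top"
    using lim by (intro tendsto_intros)
  ultimately show ?thesis
    by (rule tendsto_unique[rotated]) simp
qed

lemma set_integral_hermite_prob_gauss_atLeast_0:
  assumes "\<bar>c\<bar> = 1"
  shows "(\<integral>x\<in>{0..}. hermite_prob (Suc m) (c * x) * std_normal_density x \<partial>lborel)
    = c * hermite_prob m 0 * std_normal_density 0"
proof -
  have "c\<^sup>2 = 1"
    using assms by (metis power2_abs power_one)
  have "(\<integral>x\<in>{0..}. hermite_prob (Suc m) (c * x) * std_normal_density x \<partial>lborel)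
      = 0 - (- c * (hermite_prob m (c * 0) * std_normal_density 0))"
  proof (rule set_integral_atLeast_FTC[where F = "\<lambda>x. - c * (hermite_prob m (c * x) * std_normal_density x)"])
    fix x :: real
    have "((\<lambda>x. - c * (hermite_prob m (c * x) * std_normal_density x)) has_real_derivative
        - c * (hermite_prob m (c * x) * (- x * std_normal_density x)
          + real m * hermite_prob (m - 1) (c * x) * c * std_normal_density x)) (at x)"
      by (intro DERIV_cmult DERIV_mult' DERIV_chain2[OF hermite_prob_has_real_derivative]
          std_normal_density_has_real_derivative DERIV_cmult_Id)
    moreover have "- c * (hermite_prob m (c * x) * (- x * std_normal_density x)
          + real m * hermite_prob (m - 1) (c * x) * c * std_normal_density x)
        = hermite_prob (Suc m) (c * x) * std_normal_density x"
      using \<open>c\<^sup>2 = 1\<close> by (simp add: hermite_prob_Suc algebra_simps power2_eq_square)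
    ultimately show "((\<lambda>x. - c * (hermite_prob m (c * x) * std_normal_density x)) has_real_derivative
        hermite_prob (Suc m) (c * x) * std_normal_density x) (at x)"
      by simp
    show "isCont (\<lambda>x. hermite_prob (Suc m) (c * x) * std_normal_density x) x"
      using std_normal_density_has_real_derivative
      by (intro continuous_intros isCont_o2[OF _ isCont_hermite_prob] DERIV_isCont)
    show "set_integrable lborel {0..} (\<lambda>x. hermite_prob (Suc m) (c * x) * std_normal_density x)"
      unfolding set_integrable_def
      using integrable_hermite_prob_gauss[OF assms] by (rule integrable_mult_indicator[rotated]) simp
    show "((\<lambda>x. - c * (hermite_prob m (c * x) * std_normal_density x)) \<longlongrightarrow> 0) at_top"
      using tendsto_mult_right_zero[OF hermite_prob_gauss_tendsto_0[OF assms], of "- c" m] by simp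
  qed
  then show ?thesis
    by simp
qed

lemma gauss_inner_sign_pm:
  assumes int: "integrable lborel (\<lambda>x. g x * std_normal_density x)"
  shows "gauss_inner sign_pm g = (\<integral>x\<in>{0..}. g x * std_normal_density x \<partial>lborel)
    - (\<integral>x\<in>{0..}. g (- x) * std_normal_density x \<partial>lborel)"
proof -
  let ?f = "\<lambda>x. g x * std_normal_density x"
  have "gauss_inner sign_pm g = (\<integral>x. indicator {0..} x *\<^sub>R ?f x - indicator {..<0} x *\<^sub>R ?f x \<partial>lborel)"
    unfolding gauss_inner_def sign_pm_def
    by (intro Bochner_Integration.integral_cong) (auto split: split_indicator)
  also have "\<dots> = (\<integral>x\<in>{0..}. ?f x \<partial>lborel) - (\<integral>x\<in>{..<0}. ?f x \<partial>lborel)"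
    unfolding set_lebesgue_integral_def using int
    by (intro Bochner_Integration.integral_diff integrable_mult_indicator) auto
  also have "(\<integral>x\<in>{..<0}. ?f x \<partial>lborel) = (\<integral>x\<in>{0<..}. ?f (- x) \<partial>lborel)"
    by (subst set_integral_reflect) (simp add: greaterThan_def)
  also have "\<dots> = (\<integral>x\<in>{0..}. ?f (- x) \<partial>lborel)"
  proof (intro set_integral_cong_set eventually_mono[OF AE_lborel_singleton[of 0]])
    have "?f \<in> borel_measurable borel"
      using borel_measurable_integrable[OF int] by simp
    then have [measurable]: "(\<lambda>x. ?f (- x)) \<in> borel_measurable borel"
      by measurable
    show "set_borel_measurable lborel {0<..} (\<lambda>x. ?f (- x))"
      and "set_borel_measurable lborel {0..} (\<lambda>x. ?f (- x))"
      unfolding set_borel_measurable_def by measurable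
  qed auto
  finally show ?thesis
    by (simp add: std_normal_density_minus)
qed

lemma gauss_inner_hermite:
  "gauss_inner g (hermite k) = gauss_inner g (hermite_prob k) / sqrt (fact k)"
  unfolding gauss_inner_def hermite_def integral_divide_zero[symmetric]
  by (simp add: ac_simps)

lemma gauss_inner_sign_pm_hermite_prob_Suc:
  "gauss_inner sign_pm (hermite_prob (Suc m)) = 2 * hermite_prob m 0 * std_normal_density 0"
  using gauss_inner_sign_pm[OF integrable_hermite_prob_gauss[of 1]]
    set_integral_hermite_prob_gauss_atLeast_0[of 1 m] set_integral_hermite_prob_gauss_atLeast_0[of "-1" m]
  by simp

lemma gauss_inner_sign_pm_hermite_prob_0: "gauss_inner sign_pm (hermite_prob 0) = 0"
  using gauss_inner_sign_pm[OF integrable_hermite_prob_gauss[of 1 0]] by (simp add: hermite_prob_0_eq)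

lemma hermite_proj_sign_pm:
  "hermite_proj (Suc n) sign_pm x =
    2 * std_normal_density 0 * (\<Sum>j\<le>n. hermite_prob j 0 * hermite_prob (Suc j) x / fact (Suc j))"
proof -
  have coeff_0: "gauss_inner sign_pm (hermite 0) = 0"
    by (simp add: gauss_inner_hermite gauss_inner_sign_pm_hermite_prob_0)
  have coeff_Suc: "gauss_inner sign_pm (hermite (Suc j)) * hermite (Suc j) x
      = 2 * std_normal_density 0 * (hermite_prob j 0 * hermite_prob (Suc j) x / fact (Suc j))" for j
  proof -
    have "gauss_inner sign_pm (hermite (Suc j)) * hermite (Suc j) x = 2 * std_normal_density 0 *
        (hermite_prob j 0 * hermite_prob (Suc j) x / (sqrt (fact (Suc j)) * sqrt (fact (Suc j))))"
      unfolding gauss_inner_hermite gauss_inner_sign_pm_hermite_prob_Suc hermite_def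
      by (simp add: mult_ac del: fact_Suc)
    then show ?thesis
      by (simp del: fact_Suc)
  qed
  show ?thesis
    unfolding hermite_proj_def sum.atMost_Suc_shift sum_distrib_left
    by (simp only: coeff_0 coeff_Suc mult_zero_left add_0_left)
qed

lemma has_integral_hermite_prob_div:
  assumes "even n" and "0 \<le> x"
  shows "((\<lambda>t. hermite_prob n 0 * hermite_prob (Suc n) t / t) has_integral
    fact n * (\<Sum>j\<le>n. hermite_prob j 0 * hermite_prob (Suc j) x / fact (Suc j))) {0..x}"
proof -
  let ?S = "\<lambda>t. \<Sum>j\<le>n. hermite_prob j t * hermite_prob j 0 / fact j"
  let ?P = "\<lambda>t. \<Sum>j\<le>n. hermite_prob j 0 * hermite_prob (Suc j) t / fact (Suc j)"
  have deriv_Suc: "(hermite_prob (Suc j) has_real_derivative real (Suc j) * hermite_prob j t) (at t)" for j t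
    using hermite_prob_has_real_derivative[of "Suc j" t] by simp
  have summand_eq: "hermite_prob j 0 * (real (Suc j) * hermite_prob j t) / fact (Suc j)
      = hermite_prob j t * hermite_prob j 0 / fact j" for j t
    by (simp add: field_simps del: of_nat_Suc)
  have "(?P has_real_derivative
      (\<Sum>j\<le>n. hermite_prob j 0 * (real (Suc j) * hermite_prob j t) / fact (Suc j))) (at t)" for t
    by (intro DERIV_sum DERIV_cdivide DERIV_cmult deriv_Suc)
  then have deriv_P: "(?P has_real_derivative ?S t) (at t within {0..x})" for t
    by (simp only: summand_eq has_field_derivative_at_within)
  have "(?S has_integral ?P x - ?P 0) {0..x}"
    using assms(2) deriv_P
    by (intro fundamental_theorem_of_calculus) (simp_all add: has_real_derivative_iff_has_vector_derivative)
  moreover have "?P 0 = 0"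
    by (simp add: hermite_prob_mult_Suc_at_0)
  ultimately have integral_S: "((\<lambda>t. fact n * ?S t) has_integral fact n * ?P x) {0..x}"
    using has_integral_mult_right[of ?S "?P x - ?P 0" "{0..x}" "fact n"] by simp
  have integrand_eq: "hermite_prob n 0 * hermite_prob (Suc n) t / t = fact n * ?S t" if "t \<noteq> 0" for t
  proof -
    have "hermite_prob (Suc n) 0 = 0"
      using assms(1) by (simp add: hermite_prob_odd_eq_0)
    then have "fact n * (t * ?S t) = hermite_prob n 0 * hermite_prob (Suc n) t"
      using hermite_prob_christoffel_darboux[of t 0 n] by simp
    then show ?thesis
      using that by (simp add: divide_eq_eq mult_ac)
  qed
  show ?thesis
    by (rule has_integral_spike_finite[where S = "{0}", OF _ _ integral_S]) (simp_all add: integrand_eq)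
qed

lemma sqrt_fact_normalisation:
  "sqrt (2 * real (Suc n) / pi) * fact n / (sqrt (fact n) * sqrt (fact (Suc n))) = 2 * std_normal_density 0"
proof -
  have "sqrt (fact n) * sqrt (fact (Suc n)) = sqrt (fact n) * sqrt (fact n) * sqrt (real (Suc n))"
    unfolding fact_Suc of_nat_mult real_sqrt_mult by (simp only: mult_ac)
  also have "\<dots> = fact n * sqrt (real (Suc n))"
    by simp
  finally have "sqrt (fact n) * sqrt (fact (Suc n)) = fact n * sqrt (real (Suc n))" .
  moreover have "sqrt (2 * real (Suc n) / pi) = sqrt (real (Suc n)) * sqrt (2 / pi)"
    by (simp add: real_sqrt_mult[symmetric])
  moreover have "sqrt (2 / pi) = 2 / sqrt (2 * pi)"
    by (simp add: real_sqrt_divide real_sqrt_mult field_simps)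
  ultimately show ?thesis
    by (simp add: std_normal_density_def)
qed

theorem lemmaA5:
  fixes d :: nat and x :: real
  assumes "odd d" and "d > 0" and "x \<ge> 0"
  shows "hermite_proj d sign_pm x =
    sqrt (2 * real d / pi) * hermite (d - 1) 0 * integral {0..x} (\<lambda>t. hermite d t / t)"
proof -
  obtain n where d: "d = Suc n"
    using assms(2) gr0_implies_Suc by blast
  let ?P = "\<Sum>j\<le>n. hermite_prob j 0 * hermite_prob (Suc j) x / fact (Suc j)"
  have "even n"
    using assms(1) d by simp
  have "sqrt (2 * real d / pi) * hermite (d - 1) 0 * integral {0..x} (\<lambda>t. hermite d t / t)
      = sqrt (2 * real (Suc n) / pi) / (sqrt (fact n) * sqrt (fact (Suc n)))
        * integral {0..x} (\<lambda>t. hermite_prob n 0 * hermite_prob (Suc n) t / t)"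
    unfolding d hermite_def integral_mult_right[symmetric] by (simp add: field_simps)
  also have "\<dots> = sqrt (2 * real (Suc n) / pi) * fact n / (sqrt (fact n) * sqrt (fact (Suc n))) * ?P"
    using has_integral_hermite_prob_div[OF \<open>even n\<close> assms(3)] by (simp add: integral_unique)
  also have "\<dots> = hermite_proj d sign_pm x"
    unfolding sqrt_fact_normalisation d hermite_proj_sign_pm ..
  finally show ?thesis ..
qed

end
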